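(* Let $J$ be a finite poset on $\{1,\dots,n\}$ and let $J_p\subseteq J$ be a $p$-anchored path. (a) $J$ is strongly Gram $\mathbb Z$-congruent to the poset $J^{\to}$ whose Hasse digraph is obtained from $\mathcal H(J)$ by reorienting the arrows between vertices of $J_p$ (keeping the same underlying path) so that $J_p$ becomes an outward $p$-anchored path. (b) $J$ is strongly Gram $\mathbb Z$-congruent to the poset $J^{\leftarrow}$ whose Hasse digraph is obtained from $\mathcal H(J)$ by reorienting the arrows between vertices of $J_p$ (keeping the same underlying path) so that $J_p$ becomes an inward $p$-anchored path. (c) For every orientation of the arrows of the path $\mathcal H(J_p)$, the poset $\widetilde J$ whose Hasse digraph is obtained from $\mathcal H(J)$ by replacing the arrows between vertices of $J_p$ by this orientation is non-negative of corank $r\ge0$ if and only if $J$ is non-negative of corank $r$.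
   Context: For a finite poset $I$ on $\{1,\dots,n\}$: $C_I=[c_{ij}]$ with $c_{ij}=1$ iff $i\preceq_I j$ (else $0$); $G_I=\tfrac12(C_I+C_I^{tr})$; $I$ is non-negative of corank $r$ if $G_I$ is positive semi-definite of rank $n-r$. Posets $I,J$ on $\{1,\dots,n\}$ are strongly Gram $\mathbb Z$-congruent if $C_I=B^{tr}C_JB$ for some integer matrix $B$ with $\det B=\pm1$. $\mathcal H(I)$ is the Hasse digraph (arrow $i\to j$ iff $i\prec_I j$ with no element strictly between). A subset $J_p\subseteq J$ with $p\in J_p$ is a $p$-anchored path if: $\mathcal H(J)$ with $p$ deleted is disconnected, $J_p\setminus\{p\}$ is the vertex set of one of its connected components, the subdigraph of $\mathcal H(J)$ induced on $J_p$ has a path as underlying graph, and $p$ has degree $1$ in it. It is inward (resp. outward) if $p$ is the unique maximal (resp. minimal) element of $J_p$ in the induced order. *)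

theory Defs
  imports "HOL-Analysis.Analysis"
begin

text \<open>A finite poset on the n-element ground set is modelled as a partial order
  relation on a finite type 'n (with CARD('n) = n playing the role of {1..n}).\<close>

definition is_poset :: "('n \<Rightarrow> 'n \<Rightarrow> bool) \<Rightarrow> bool" where
  "is_poset le \<longleftrightarrow> (\<forall>i. le i i) \<and> (\<forall>i j. le i j \<and> le j i \<longrightarrow> i = j)
     \<and> (\<forall>i j k. le i j \<and> le j k \<longrightarrow> le i k)"

definition incmat :: "('n::finite \<Rightarrow> 'n \<Rightarrow> bool) \<Rightarrow> int^'n^'n" where
  "incmat le = (\<chi> i j. if le i j then 1 else 0)"

definition gram :: "('n::finite \<Rightarrow> 'n \<Rightarrow> bool) \<Rightarrow> real^'n^'n" where
  "gram le = (\<chi> i j. (real_of_int (incmat le $ i $ j) + real_of_int (incmat le $ j $ i)) / 2)"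

definition psd :: "real^'n^'n \<Rightarrow> bool" where
  "psd G \<longleftrightarrow> (\<forall>x. 0 \<le> x \<bullet> (G *v x))"

definition nonneg_corank :: "('n::finite \<Rightarrow> 'n \<Rightarrow> bool) \<Rightarrow> nat \<Rightarrow> bool" where
  "nonneg_corank le r \<longleftrightarrow> psd (gram le) \<and> r \<le> CARD('n) \<and> rank (gram le) = CARD('n) - r"

definition strong_gram_congr :: "('n::finite \<Rightarrow> 'n \<Rightarrow> bool) \<Rightarrow> ('n \<Rightarrow> 'n \<Rightarrow> bool) \<Rightarrow> bool" where
  "strong_gram_congr I J \<longleftrightarrow>
     (\<exists>B :: int^'n^'n. (det B = 1 \<or> det B = -1) \<and> incmat I = transpose B ** incmat J ** B)"

definition hasse :: "('n \<Rightarrow> 'n \<Rightarrow> bool) \<Rightarrow> 'n \<Rightarrow> 'n \<Rightarrow> bool" where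
  "hasse le i j \<longleftrightarrow> le i j \<and> i \<noteq> j \<and> \<not> (\<exists>k. k \<noteq> i \<and> k \<noteq> j \<and> le i k \<and> le k j)"

definition hadj :: "('n \<Rightarrow> 'n \<Rightarrow> bool) \<Rightarrow> 'n \<Rightarrow> 'n \<Rightarrow> bool" where
  "hadj le i j \<longleftrightarrow> hasse le i j \<or> hasse le j i"

definition conn_del :: "('n \<Rightarrow> 'n \<Rightarrow> bool) \<Rightarrow> 'n \<Rightarrow> 'n \<Rightarrow> 'n \<Rightarrow> bool" where
  "conn_del le p = (\<lambda>u v. u \<noteq> p \<and> v \<noteq> p \<and> hadj le u v)\<^sup>*\<^sup>*"

definition is_component_del :: "('n \<Rightarrow> 'n \<Rightarrow> bool) \<Rightarrow> 'n \<Rightarrow> 'n set \<Rightarrow> bool" where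
  "is_component_del le p C \<longleftrightarrow> C \<noteq> {} \<and> p \<notin> C \<and>
     (\<forall>u\<in>C. \<forall>v. v \<noteq> p \<longrightarrow> (conn_del le p u v \<longleftrightarrow> v \<in> C))"

definition disconnected_del :: "('n \<Rightarrow> 'n \<Rightarrow> bool) \<Rightarrow> 'n \<Rightarrow> bool" where
  "disconnected_del le p \<longleftrightarrow> (\<exists>u v. u \<noteq> p \<and> v \<noteq> p \<and> \<not> conn_del le p u v)"

definition induced_is_path :: "('n \<Rightarrow> 'n \<Rightarrow> bool) \<Rightarrow> 'n set \<Rightarrow> bool" where
  "induced_is_path le S \<longleftrightarrow> (\<exists>xs. distinct xs \<and> set xs = S \<and>
     (\<forall>u\<in>S. \<forall>v\<in>S. hadj le u v \<longleftrightarrow>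
        (\<exists>i. Suc i < length xs \<and> {xs ! i, xs ! Suc i} = {u, v})))"

definition anchored_path :: "('n \<Rightarrow> 'n \<Rightarrow> bool) \<Rightarrow> 'n \<Rightarrow> 'n set \<Rightarrow> bool" where
  "anchored_path le p S \<longleftrightarrow> p \<in> S \<and> disconnected_del le p \<and> is_component_del le p (S - {p})
     \<and> induced_is_path le S \<and> card {v \<in> S. hadj le p v} = 1"

definition inward_anchored_path :: "('n \<Rightarrow> 'n \<Rightarrow> bool) \<Rightarrow> 'n \<Rightarrow> 'n set \<Rightarrow> bool" where
  "inward_anchored_path le p S \<longleftrightarrow> anchored_path le p S \<and>
     {x \<in> S. \<forall>y \<in> S. le x y \<longrightarrow> y = x} = {p}"

definition outward_anchored_path :: "('n \<Rightarrow> 'n \<Rightarrow> bool) \<Rightarrow> 'n \<Rightarrow> 'n set \<Rightarrow> bool" where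
  "outward_anchored_path le p S \<longleftrightarrow> anchored_path le p S \<and>
     {x \<in> S. \<forall>y \<in> S. le y x \<longrightarrow> y = x} = {p}"

definition reoriented_on :: "('n \<Rightarrow> 'n \<Rightarrow> bool) \<Rightarrow> 'n set \<Rightarrow> ('n \<Rightarrow> 'n \<Rightarrow> bool) \<Rightarrow> bool" where
  "reoriented_on J S J' \<longleftrightarrow> is_poset J' \<and>
     (\<forall>u v. \<not> (u \<in> S \<and> v \<in> S) \<longrightarrow> (hasse J' u v \<longleftrightarrow> hasse J u v)) \<and>
     (\<forall>u\<in>S. \<forall>v\<in>S. hadj J' u v \<longleftrightarrow> hadj J u v)"

end

theory Submission
  imports Defs
begin

(* Write the anchored path as p = x_0, x_1, ..., x_k. Its tail x_1, ..., x_k meets the rest of the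
   poset only through p, so J is determined by its restriction to the complement of the tail and by
   the orientation of the k path edges: x <= y iff the position of x on the path is below that of y
   in the path order (vertices off the path having position 0) and, after collapsing the path onto
   p, the image of x is below that of y in J. Every reorientation of the path arises from this
   gluing for some orientation.
   If x_j is a source of the path, reversing its two edges (its only edge when j = k) changes the
   incidence matrix by the integral congruence with the involution replacing column x_j of the
   identity by the sum of the unit vectors at x_(j-1) and x_(j+1) minus the one at x_j. Finitely
   many such flips turn every orientation into the outward one, so all reorientations are strongly
   Gram Z-congruent; a congruence over Z preserves positive semi-definiteness and rank of the
   symmetrised Gram matrix, hence non-negativity and corank. *)

section \<open>Congruence of square matrices\<close>

definition matrix_congruent :: "'a::comm_ring_1^'n^'n \<Rightarrow> 'a^'n^'n \<Rightarrow> bool" where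
  "matrix_congruent M N \<longleftrightarrow>
     (\<exists>B B'. B ** B' = mat 1 \<and> B' ** B = mat 1 \<and> N = transpose B ** M ** B)"

lemma matrix_congruent_refl: "matrix_congruent M M"
  unfolding matrix_congruent_def by (metis matrix_mul_lid matrix_mul_rid transpose_mat)

lemma matrix_congruent_sym:
  assumes "matrix_congruent M N" shows "matrix_congruent N M"
proof -
  obtain B B' where B: "B ** B' = mat 1" "B' ** B = mat 1" "N = transpose B ** M ** B"
    using assms unfolding matrix_congruent_def by blast
  have "transpose B' ** N ** B' = transpose (B ** B') ** M ** (B ** B')"
    by (simp add: B(3) matrix_mul_assoc matrix_transpose_mul)
  then have "M = transpose B' ** N ** B'" by (simp add: B(1))
  then show ?thesis unfolding matrix_congruent_def using B(1,2) by blast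
qed

lemma matrix_congruent_trans:
  assumes "matrix_congruent L M" "matrix_congruent M N" shows "matrix_congruent L N"
proof -
  obtain A A' where A: "A ** A' = mat 1" "A' ** A = mat 1" "M = transpose A ** L ** A"
    using assms(1) unfolding matrix_congruent_def by blast
  obtain B B' where B: "B ** B' = mat 1" "B' ** B = mat 1" "N = transpose B ** M ** B"
    using assms(2) unfolding matrix_congruent_def by blast
  have "(A ** B) ** (B' ** A') = A ** (B ** B') ** A'"
    and "(B' ** A') ** (A ** B) = B' ** (A' ** A) ** B"
    by (simp_all add: matrix_mul_assoc)
  moreover have "N = transpose (A ** B) ** L ** (A ** B)"
    by (simp add: A(3) B(3) matrix_mul_assoc matrix_transpose_mul)
  ultimately show ?thesis
    unfolding matrix_congruent_def using A(1,2) B(1,2) by (metis matrix_mul_rid)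
qed

lemma strong_gram_congr_if_matrix_congruent:
  assumes "matrix_congruent (incmat J') (incmat J)"
  shows "strong_gram_congr J J'"
proof -
  obtain B B' where B: "B ** B' = mat 1" "incmat J = transpose B ** incmat J' ** B"
    using assms unfolding matrix_congruent_def by blast
  have "det B * det B' = 1" using arg_cong[OF B(1), of det] by (simp add: det_mul)
  then have "det B = 1 \<or> det B = -1" by (rule pos_zmult_eq_1_iff_lemma)
  then show ?thesis unfolding strong_gram_congr_def using B(2) by blast
qed

lemma map_matrix_of_int_mult:
  "map_matrix of_int (A ** B) = map_matrix of_int A ** (map_matrix of_int B :: 'a::comm_ring_1^_^_)"
  by (simp add: map_matrix_def matrix_matrix_mult_def vec_eq_iff)

lemma matrix_congruent_map_of_int:
  assumes "matrix_congruent M N"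
  shows "matrix_congruent (map_matrix of_int M) (map_matrix of_int N :: 'a::comm_ring_1^'n^'n)"
proof -
  obtain B B' where B: "B ** B' = mat 1" "B' ** B = mat 1" "N = transpose B ** M ** B"
    using assms unfolding matrix_congruent_def by blast
  have of_int_mat: "map_matrix of_int (mat 1 :: int^'n^'n) = (mat 1 :: 'a^'n^'n)"
    and of_int_transpose:
      "map_matrix of_int (transpose B) = (transpose (map_matrix of_int B) :: 'a^'n^'n)"
    by (simp_all add: map_matrix_def mat_def transpose_def vec_eq_iff)
  show ?thesis
    unfolding matrix_congruent_def using B
    by (metis map_matrix_of_int_mult of_int_mat of_int_transpose)
qed

lemma matrix_add_rdistrib: "(A + B) ** C = A ** C + B ** (C :: 'a::semiring_1^_^_)"
  by (simp add: matrix_matrix_mult_def vec_eq_iff sum.distrib distrib_right)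

lemma matrix_congruent_symmetrization:
  fixes M N :: "real^'n^'n"
  assumes "matrix_congruent M N"
  shows "matrix_congruent (c *\<^sub>R (M + transpose M)) (c *\<^sub>R (N + transpose N))"
proof -
  obtain B B' where B: "B ** B' = mat 1" "B' ** B = mat 1" "N = transpose B ** M ** B"
    using assms unfolding matrix_congruent_def by blast
  have "transpose N = transpose B ** transpose M ** B"
    by (simp add: B(3) matrix_transpose_mul matrix_mul_assoc)
  then have "c *\<^sub>R (N + transpose N) = transpose B ** (c *\<^sub>R (M + transpose M)) ** B"
    by (simp add: B(3) matrix_add_ldistrib matrix_add_rdistrib matrix_scalar_ac
        scalar_matrix_assoc[symmetric] scaleR_add_right)
  then show ?thesis unfolding matrix_congruent_def using B(1,2) by blast
qed

lemma psd_matrix_congruent: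
  fixes G H :: "real^'n^'n"
  assumes "matrix_congruent G H" "psd G" shows "psd H"
proof -
  obtain B where H: "H = transpose B ** G ** B"
    using assms(1) unfolding matrix_congruent_def by blast
  have "x \<bullet> (H *v x) = (B *v x) \<bullet> (G *v (B *v x))" for x
  proof -
    have "x \<bullet> (H *v x) = x \<bullet> ((G *v (B *v x)) v* B)"
      by (simp add: H matrix_vector_mul_assoc[symmetric])
    then show ?thesis by (metis dot_lmul_matrix inner_commute)
  qed
  then show ?thesis using assms(2) unfolding psd_def by simp
qed

lemma rank_matrix_congruent_le:
  fixes G H :: "real^'n^'n"
  assumes "matrix_congruent G H" shows "rank H \<le> rank G"
proof -
  obtain B where H: "H = transpose B ** G ** B"
    using assms unfolding matrix_congruent_def by blast
  have "rank H \<le> rank (transpose B ** G)" unfolding H by (rule rank_mul_le_left)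
  also have "\<dots> \<le> rank G" by (rule rank_mul_le_right)
  finally show ?thesis .
qed

lemma gram_eq_symmetrization:
  "gram J = (1/2) *\<^sub>R (map_matrix of_int (incmat J) + transpose (map_matrix of_int (incmat J)))"
  by (simp add: gram_def transpose_def vec_eq_iff)

lemma nonneg_corank_matrix_congruent:
  assumes "matrix_congruent (incmat J) (incmat J')"
  shows "nonneg_corank J' r \<longleftrightarrow> nonneg_corank J r"
proof -
  have "matrix_congruent (gram J) (gram J')"
    unfolding gram_eq_symmetrization
    by (intro matrix_congruent_symmetrization matrix_congruent_map_of_int assms)
  moreover from this have "matrix_congruent (gram J') (gram J)" by (rule matrix_congruent_sym)
  ultimately have "psd (gram J') \<longleftrightarrow> psd (gram J)" "rank (gram J') = rank (gram J)"
    by (auto intro: psd_matrix_congruent le_antisym rank_matrix_congruent_le)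
  then show ?thesis unfolding nonneg_corank_def by simp
qed

definition replace_column :: "'n \<Rightarrow> ('n \<Rightarrow> 'a::zero_neq_one) \<Rightarrow> 'a^'n^'n" where
  "replace_column v w = (\<chi> a b. if b = v then w a else if a = b then 1 else 0)"

lemma replace_column_mult_eq:
  fixes w :: "'n::finite \<Rightarrow> 'a::comm_ring_1"
  shows "(M ** replace_column v w) $ x $ y
    = (if y = v then \<Sum>a\<in>UNIV. M $ x $ a * w a else M $ x $ y)"
  by (cases "y = v")
    (simp_all add: matrix_matrix_mult_def replace_column_def mult.commute[of "M $ x $ _"]
      mult_if_delta)

lemma transpose_replace_column_mult_eq:
  fixes w :: "'n::finite \<Rightarrow> 'a::comm_ring_1"
  shows "(transpose (replace_column v w) ** M) $ x $ y
    = (if x = v then \<Sum>a\<in>UNIV. w a * M $ a $ y else M $ x $ y)"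
  by (cases "x = v")
    (simp_all add: matrix_matrix_mult_def replace_column_def transpose_def mult_if_delta)

lemma replace_column_involution:
  fixes w :: "'n::finite \<Rightarrow> 'a::comm_ring_1"
  assumes "w v = -1"
  shows "replace_column v w ** replace_column v w = mat 1"
proof -
  have column_v: "(\<Sum>a\<in>UNIV. replace_column v w $ x $ a * w a) = (if x = v then 1 else 0)" for x
  proof -
    have "(\<Sum>a\<in>UNIV. replace_column v w $ x $ a * w a)
        = w x * w v + (\<Sum>a\<in>UNIV - {v}. (if x = a then w a else 0))"
      by (simp add: sum.remove[of UNIV v] replace_column_def mult_if_delta cong: if_cong)
    also have "\<dots> = w x * w v + (if x = v then 0 else w x)"
      by simp
    finally show ?thesis using assms by auto
  qed
  have "(replace_column v w ** replace_column v w) $ x $ y = mat 1 $ x $ y" for x y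
    unfolding replace_column_mult_eq column_v by (simp add: mat_def replace_column_def)
  then show ?thesis by (simp add: vec_eq_iff)
qed

lemma is_poset_reflp_transp: "is_poset J \<Longrightarrow> reflp J \<and> transp J"
  unfolding is_poset_def by (metis reflpI transpI)

lemma poset_rtranclp_hasse:
  fixes J :: "'n::finite \<Rightarrow> 'n \<Rightarrow> bool"
  assumes "is_poset J" "J x y"
  shows "(hasse J)\<^sup>*\<^sup>* x y"
proof -
  have refl: "J a a" and antisym: "J a b \<Longrightarrow> J b a \<Longrightarrow> a = b"
    and trans: "J a b \<Longrightarrow> J b c \<Longrightarrow> J a c" for a b c
    using assms(1) unfolding is_poset_def by blast+
  define interval where "interval a b = {c. J a c \<and> J c b}" for a b
  have "(hasse J)\<^sup>*\<^sup>* a b" if "J a b" "card (interval a b) = n" for n a b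
    using that
  proof (induction n arbitrary: a b rule: less_induct)
    case (less n a b)
    show ?case
    proof (cases "hasse J a b \<or> a = b")
      case False
      then obtain c where c: "c \<noteq> a" "c \<noteq> b" "J a c" "J c b"
        using less.prems(1) unfolding hasse_def by blast
      have "interval a c \<subseteq> interval a b" "interval c b \<subseteq> interval a b"
        unfolding interval_def using c(3,4) trans by blast+
      moreover have "b \<in> interval a b - interval a c" "a \<in> interval a b - interval c b"
        unfolding interval_def using c antisym refl less.prems(1) by blast+
      ultimately have "interval a c \<subset> interval a b" "interval c b \<subset> interval a b" by blast+
      then have "card (interval a c) < n" "card (interval c b) < n"
        using less.prems(2) psubset_card_mono[OF finite] by blast+
      then have "(hasse J)\<^sup>*\<^sup>* a c" "(hasse J)\<^sup>*\<^sup>* c b" using less.IH c(3,4) by blast+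
      then show ?thesis by (rule rtranclp_trans)
    qed blast
  qed
  then show ?thesis using assms(2) by blast
qed

lemma monotone_if_monotone_on_hasse:
  fixes J :: "'n::finite \<Rightarrow> 'n \<Rightarrow> bool"
  assumes "is_poset J" "reflp S" "transp S"
    and "\<And>a b. hasse J a b \<Longrightarrow> S (f a) (f b)" and "J x y"
  shows "S (f x) (f y)"
  using poset_rtranclp_hasse[OF assms(1,5)]
proof (induction rule: rtranclp_induct)
  case base
  then show ?case using assms(2) reflpD by metis
next
  case (step y z)
  then show ?case using assms(3,4) transpD by metis
qed

section \<open>Path orders\<close>

(* An order on the positions 0, 1, 2, ... of a path: e m says that the edge between m - 1 and m
   points upwards. *)
definition path_le :: "(nat \<Rightarrow> bool) \<Rightarrow> nat \<Rightarrow> nat \<Rightarrow> bool" where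
  "path_le e i j \<longleftrightarrow>
     (i \<le> j \<and> (\<forall>m\<in>{i<..j}. e m)) \<or> (j \<le> i \<and> (\<forall>m\<in>{j<..i}. \<not> e m))"

lemma path_le_refl [simp]: "path_le e i i"
  by (simp add: path_le_def)

lemma path_le_Suc: "path_le e i (Suc i) \<longleftrightarrow> e (Suc i)"
  by (auto simp: path_le_def le_Suc_eq)

lemma Suc_path_le: "path_le e (Suc i) i \<longleftrightarrow> \<not> e (Suc i)"
  by (auto simp: path_le_def le_Suc_eq)

lemma path_le_between:
  assumes "path_le e i m" "path_le e m j"
  shows "min i j \<le> m \<and> m \<le> max i j"
proof (rule ccontr)
  assume "\<not> ?thesis"
  then consider "m < i" "m < j" | "i < m" "j < m" by linarith
  then show False
  proof cases
    case 1
    have "\<not> e (Suc m)" using assms(1) 1 by (auto simp: path_le_def)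
    moreover have "e (Suc m)" using assms(2) 1 by (auto simp: path_le_def)
    ultimately show False by simp
  next
    case 2
    have "e m" using assms(1) 2 by (auto simp: path_le_def)
    moreover have "\<not> e m" using assms(2) 2 by (auto simp: path_le_def)
    ultimately show False by simp
  qed
qed

lemma path_le_antisym: "path_le e i j \<Longrightarrow> path_le e j i \<Longrightarrow> i = j"
  using path_le_between[of e i j i] by simp

lemma path_le_trans:
  assumes "path_le e i j" "path_le e j l"
  shows "path_le e i l"
proof -
  have "e m" if "i < m" "m \<le> l" for m
    using assms that by (cases "m \<le> j") (auto simp: path_le_def)
  moreover have "\<not> e m" if "l < m" "m \<le> i" for m
    using assms that by (cases "m \<le> j") (auto simp: path_le_def)
  ultimately show ?thesis by (auto simp: path_le_def)
qed

lemma hasse_path_le: "hasse (path_le e) i j \<longleftrightarrow> (j = Suc i \<and> e j) \<or> (i = Suc j \<and> \<not> e i)"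
proof
  assume "hasse (path_le e) i j"
  then have le: "path_le e i j" and "i \<noteq> j"
    and no_between: "\<And>m. m \<noteq> i \<Longrightarrow> m \<noteq> j \<Longrightarrow> \<not> (path_le e i m \<and> path_le e m j)"
    unfolding hasse_def by blast+
  consider "i < j" | "j < i" using \<open>i \<noteq> j\<close> by linarith
  then show "(j = Suc i \<and> e j) \<or> (i = Suc j \<and> \<not> e i)"
  proof cases
    case 1
    then have "path_le e i (Suc i) \<and> path_le e (Suc i) j" using le by (auto simp: path_le_def)
    then have "j = Suc i" using no_between[of "Suc i"] by auto
    then show ?thesis using le path_le_Suc by auto
  next
    case 2
    then have "path_le e i (Suc j) \<and> path_le e (Suc j) j" using le by (auto simp: path_le_def)
    then have "i = Suc j" using no_between[of "Suc j"] by auto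
    then show ?thesis using le Suc_path_le by auto
  qed
next
  assume "(j = Suc i \<and> e j) \<or> (i = Suc j \<and> \<not> e i)"
  then show "hasse (path_le e) i j"
    unfolding hasse_def by (auto simp: path_le_Suc Suc_path_le dest: path_le_between)
qed

lemma reflp_path_le: "reflp (path_le e)"
  by (simp add: reflpI)

lemma transp_path_le: "transp (path_le e)"
  by (meson path_le_trans transpI)

lemma path_le_cong:
  "(\<And>m. min i j < m \<Longrightarrow> m \<le> max i j \<Longrightarrow> e m = e' m) \<Longrightarrow> path_le e i j = path_le e' i j"
  by (auto simp: path_le_def)

lemma path_le_split:
  "min i l \<le> j \<Longrightarrow> j \<le> max i l \<Longrightarrow> path_le e i l \<longleftrightarrow> path_le e i j \<and> path_le e j l"
  by (auto simp: path_le_def)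

lemma path_le_consistent:
  "path_le e i l \<Longrightarrow> min i l < m \<Longrightarrow> m < max i l \<Longrightarrow> e (Suc m) = e m"
  by (auto simp: path_le_def)

lemma path_le_True [simp]: "path_le (\<lambda>_. True) i j \<longleftrightarrow> i \<le> j"
  by (auto simp: path_le_def)

lemma path_le_False [simp]: "path_le (\<lambda>_. False) i j \<longleftrightarrow> j \<le> i"
  by (auto simp: path_le_def)

lemma path_le_least_preorder:
  assumes "reflp R" "transp R"
    and up: "\<And>m. Suc m < L \<Longrightarrow> e (Suc m) \<Longrightarrow> R (f m) (f (Suc m))"
    and down: "\<And>m. Suc m < L \<Longrightarrow> \<not> e (Suc m) \<Longrightarrow> R (f (Suc m)) (f m)"
    and "path_le e i l" "i < L" "l < L"
  shows "R (f i) (f l)"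
proof -
  have "R (f i) (f l)" if "i \<le> l" "l < L" "path_le e i l" for l
    using that
  proof (induction l)
    case (Suc l)
    show ?case
    proof (cases "i = Suc l")
      case False
      then have "i \<le> l" "path_le e i l" "e (Suc l)"
        using Suc.prems path_le_split[of i "Suc l" l] path_le_Suc by auto
      then show ?thesis using Suc.IH Suc.prems(2) up assms(2) by (meson Suc_lessD transpD)
    qed (use assms(1) reflpD in metis)
  qed (use assms(1) reflpD in auto)
  moreover have "R (f i) (f l)" if "l \<le> i" "i < L" "path_le e i l" for i
    using that
  proof (induction i)
    case (Suc i)
    show ?case
    proof (cases "l = Suc i")
      case False
      then have "l \<le> i" "path_le e i l" "\<not> e (Suc i)"
        using Suc.prems path_le_split[of "Suc i" l i] Suc_path_le by auto
      then show ?thesis using Suc.IH Suc.prems(2) down assms(2) by (meson Suc_lessD transpD)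
    qed (use assms(1) reflpD in metis)
  qed (use assms(1) reflpD in auto)
  ultimately show ?thesis using assms(5-7) by (meson nat_le_linear)
qed

locale path_source =
  fixes e :: "nat \<Rightarrow> bool" and j k :: nat
  assumes pos: "0 < j" and le_k: "j \<le> k"
    and not_e: "\<not> e j" and e_Suc: "j < k \<Longrightarrow> e (Suc j)"
begin

abbreviation flipped :: "nat \<Rightarrow> bool" where
  "flipped \<equiv> e(j := True, Suc j := False)"

lemma flipped_path_le:
  assumes "i \<le> k" "l \<le> k" "i \<noteq> j" "l \<noteq> j"
  shows "path_le flipped i l = path_le e i l"
proof (cases "max i l < j \<or> j < min i l")
  case True
  then have "flipped m = e m" if "min i l < m" "m \<le> max i l" for m
    using that by auto
  then show ?thesis by (rule path_le_cong)
next
  case False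
  then have between: "min i l < j" "j < max i l" using assms(3,4) by auto
  have "e (Suc j) \<noteq> e j" "flipped (Suc j) \<noteq> flipped j"
    using between assms(1,2) e_Suc not_e by simp_all
  then have "\<not> path_le e i l" "\<not> path_le flipped i l"
    using path_le_consistent[OF _ between] by blast+
  then show ?thesis by simp
qed

lemma flipped_column:
  assumes "i \<le> k" "i \<noteq> j"
  shows "of_bool (path_le e i (j - 1)) + (if j < k then of_bool (path_le e i (Suc j)) else 0)
      - of_bool (path_le e i j) = (of_bool (path_le flipped i j) :: int)"
proof -
  obtain j0 where j: "j = Suc j0" using pos gr0_implies_Suc by blast
  show ?thesis
  proof (cases "i < j")
    case True
    have "path_le flipped i j0 = path_le e i j0" by (rule path_le_cong) (use True j in auto)
    then show ?thesis using True not_e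
      by (simp add: j path_le_split[of i "Suc j0" j0] path_le_split[of i "Suc (Suc j0)" "Suc j0"]
          path_le_Suc)
  next
    case False
    then have "j < i" "j < k" using assms by auto
    have "path_le flipped i (Suc j) = path_le e i (Suc j)"
      by (rule path_le_cong) (use \<open>j < i\<close> in auto)
    then show ?thesis using \<open>j < i\<close> \<open>j < k\<close> e_Suc
      by (simp add: j path_le_split[of i j0 "Suc j0"] path_le_split[of i "Suc j0" "Suc (Suc j0)"]
          Suc_path_le)
  qed
qed

lemma flipped_row:
  assumes "i \<le> k" "i \<noteq> j"
  shows "of_bool (path_le e (j - 1) i) + (if j < k then of_bool (path_le e (Suc j) i) else 0)
      - of_bool (path_le e j i) = (of_bool (path_le flipped j i) :: int)"
proof -
  obtain j0 where j: "j = Suc j0" using pos gr0_implies_Suc by blast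
  show ?thesis
  proof (cases "i < j")
    case True
    then show ?thesis using not_e e_Suc
      by (simp add: j path_le_split[of "Suc j0" i j0] path_le_split[of "Suc (Suc j0)" i "Suc j0"]
          Suc_path_le)
  next
    case False
    then have "j < i" "j < k" using assms by auto
    then show ?thesis using not_e e_Suc
      by (simp add: j path_le_split[of "Suc j0" i "Suc (Suc j0)"] path_le_split[of j0 i "Suc j0"]
          path_le_Suc)
  qed
qed

end

section \<open>Reorienting an anchored path\<close>

definition path_pos :: "'a list \<Rightarrow> 'a \<Rightarrow> nat" where
  "path_pos xs x = (if x \<in> set xs then the_inv_into {..<length xs} ((!) xs) x else 0)"

definition collapse :: "'a \<Rightarrow> 'a list \<Rightarrow> 'a \<Rightarrow> 'a" where
  "collapse p xs x = (if x \<in> set xs then p else x)"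

definition reorient :: "('a \<Rightarrow> 'a \<Rightarrow> bool) \<Rightarrow> 'a \<Rightarrow> 'a list \<Rightarrow> (nat \<Rightarrow> bool) \<Rightarrow> 'a \<Rightarrow> 'a \<Rightarrow> bool" where
  "reorient J p xs e x y \<longleftrightarrow>
     path_le e (path_pos xs x) (path_pos xs y) \<and> J (collapse p xs x) (collapse p xs y)"

definition orientation :: "('a \<Rightarrow> 'a \<Rightarrow> bool) \<Rightarrow> 'a list \<Rightarrow> nat \<Rightarrow> bool" where
  "orientation J xs m \<longleftrightarrow> J (xs ! (m - 1)) (xs ! m)"

lemma path_pos_nth [simp]: "distinct xs \<Longrightarrow> i < length xs \<Longrightarrow> path_pos xs (xs ! i) = i"
  by (simp add: path_pos_def the_inv_into_f_f inj_on_nth)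

lemma nth_path_pos [simp]: "distinct xs \<Longrightarrow> x \<in> set xs \<Longrightarrow> xs ! path_pos xs x = x"
  by (metis in_set_conv_nth path_pos_nth)

lemma path_pos_less: "xs \<noteq> [] \<Longrightarrow> distinct xs \<Longrightarrow> path_pos xs x < length xs"
  by (metis in_set_conv_nth length_greater_0_conv path_pos_def path_pos_nth)

lemma collapse_nth [simp]: "i < length xs \<Longrightarrow> collapse p xs (xs ! i) = p"
  by (simp add: collapse_def)

lemma collapse_collapse [simp]: "collapse p xs (collapse p xs x) = collapse p xs x"
  by (simp add: collapse_def)

lemma reoriented_on_hadj: "reoriented_on J S J' \<Longrightarrow> hadj J' = hadj J"
  unfolding reoriented_on_def hadj_def by (metis (no_types))

locale anchored_path_list =
  fixes J :: "'n::finite \<Rightarrow> 'n \<Rightarrow> bool" and p :: 'n and xs :: "'n list"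
  assumes poset: "is_poset J"
    and distinct: "distinct xs" and nonempty: "xs \<noteq> []" and first: "xs ! 0 = p"
    and hadj_nth: "\<And>i l. i < length xs \<Longrightarrow> l < length xs \<Longrightarrow>
        hadj J (xs ! i) (xs ! l) \<longleftrightarrow> l = Suc i \<or> i = Suc l"
    and hadj_closed: "\<And>t y. t \<in> set xs \<Longrightarrow> t \<noteq> p \<Longrightarrow> hadj J t y \<Longrightarrow> y \<in> set xs"
begin

abbreviation in_tail :: "'n \<Rightarrow> bool" where
  "in_tail x \<equiv> x \<in> set xs \<and> x \<noteq> p"

lemma J_refl: "J x x" and J_antisym: "J x y \<Longrightarrow> J y x \<Longrightarrow> x = y"
  and J_trans: "J x y \<Longrightarrow> J y z \<Longrightarrow> J x z"
  using poset unfolding is_poset_def by blast+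

lemma p_in_set: "p \<in> set xs"
  using first nonempty nth_mem by fastforce

lemma path_pos_eq_0_iff: "path_pos xs x = 0 \<longleftrightarrow> \<not> in_tail x"
  by (metis distinct first nonempty nth_path_pos path_pos_def path_pos_nth length_greater_0_conv)

lemma path_pos_p [simp]: "path_pos xs p = 0"
  using path_pos_eq_0_iff by blast

lemma nth_path_pos_if: "xs ! path_pos xs x = (if in_tail x then x else p)"
  by (metis distinct first nth_path_pos path_pos_eq_0_iff)

lemma collapse_if: "collapse p xs x = (if in_tail x then p else x)"
  by (simp add: collapse_def)

lemma hadj_path_cases: "hadj J a b \<Longrightarrow> (a \<in> set xs \<and> b \<in> set xs) \<or> (\<not> in_tail a \<and> \<not> in_tail b)"
  using hadj_closed hadj_def by metis

lemma reorient_nth [simp]: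
  "i < length xs \<Longrightarrow> l < length xs \<Longrightarrow> reorient J p xs e (xs ! i) (xs ! l) = path_le e i l"
  by (simp add: reorient_def collapse_def distinct J_refl)

lemma reorient_off_tail:
  assumes "\<not> in_tail x" "\<not> in_tail y"
  shows "reorient J p xs e x y = J x y"
proof -
  have "path_pos xs x = 0" "path_pos xs y = 0" using assms by (simp_all add: path_pos_eq_0_iff)
  then show ?thesis using assms by (simp add: reorient_def collapse_if)
qed

lemma is_poset_reorient: "is_poset (reorient J p xs e)"
  unfolding is_poset_def
proof (intro conjI allI impI)
  fix x y assume "reorient J p xs e x y \<and> reorient J p xs e y x"
  then have "path_pos xs x = path_pos xs y" "collapse p xs x = collapse p xs y"
    unfolding reorient_def using path_le_antisym J_antisym by blast+
  then show "x = y" by (metis collapse_if nth_path_pos_if)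
qed (auto simp: reorient_def J_refl intro: path_le_trans J_trans)

lemma collapse_monotone:
  assumes "is_poset J'"
    and hasse_eq: "\<And>a b. \<not> (a \<in> set xs \<and> b \<in> set xs) \<Longrightarrow> hasse J' a b = hasse J a b"
    and "J x y"
  shows "J' (collapse p xs x) (collapse p xs y)"
proof (rule monotone_if_monotone_on_hasse[where S = J' and f = "collapse p xs",
      OF poset _ _ _ \<open>J x y\<close>])
  show "reflp J'" "transp J'" using is_poset_reflp_transp[OF assms(1)] by simp_all
  fix a b assume "hasse J a b"
  then have "hadj J a b" by (simp add: hadj_def)
  then consider "a \<in> set xs" "b \<in> set xs"
    | "\<not> in_tail a" "\<not> in_tail b" "\<not> (a \<in> set xs \<and> b \<in> set xs)"
    using hadj_path_cases by blast
  then show "J' (collapse p xs a) (collapse p xs b)"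
  proof cases
    case 1
    then show ?thesis using assms(1) by (simp add: collapse_def is_poset_def)
  next
    case 2
    then have "hasse J' a b" using hasse_eq \<open>hasse J a b\<close> by blast
    then show ?thesis using 2 by (simp add: collapse_if hasse_def)
  qed
qed

lemma path_pos_monotone: "J x y \<Longrightarrow> path_le (orientation J xs) (path_pos xs x) (path_pos xs y)"
proof (rule monotone_if_monotone_on_hasse[where f = "path_pos xs",
      OF poset reflp_path_le transp_path_le])
  fix a b assume "hasse J a b"
  then have "hadj J a b" by (simp add: hadj_def)
  then consider "a \<in> set xs" "b \<in> set xs" | "\<not> in_tail a" "\<not> in_tail b"
    using hadj_path_cases by blast
  then show "path_le (orientation J xs) (path_pos xs a) (path_pos xs b)"
  proof cases
    case 1
    then obtain i l where il: "i < length xs" "l < length xs" "a = xs ! i" "b = xs ! l"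
      by (metis in_set_conv_nth)
    then have "l = Suc i \<or> i = Suc l" using hadj_nth \<open>hadj J a b\<close> by blast
    moreover have "\<not> J b a" using \<open>hasse J a b\<close> J_antisym by (auto simp: hasse_def)
    ultimately show ?thesis
      using il \<open>hasse J a b\<close> distinct
      by (auto simp: orientation_def path_le_Suc Suc_path_le hasse_def)
  next
    case 2
    then show ?thesis by (simp add: iffD2[OF path_pos_eq_0_iff])
  qed
qed

lemma orientation_path_le_nth:
  assumes "path_le (orientation J xs) i l" "i < length xs" "l < length xs"
  shows "J (xs ! i) (xs ! l)"
proof (rule path_le_least_preorder[where R = J and f = "(!) xs", OF _ _ _ _ assms])
  show "reflp J" "transp J" using is_poset_reflp_transp[OF poset] by simp_all
next
  fix m assume "orientation J xs (Suc m)"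
  then show "J (xs ! m) (xs ! Suc m)" by (simp add: orientation_def)
next
  fix m assume "Suc m < length xs" "\<not> orientation J xs (Suc m)"
  moreover have "hadj J (xs ! m) (xs ! Suc m)" using hadj_nth calculation(1) by simp
  ultimately show "J (xs ! Suc m) (xs ! m)" by (auto simp: orientation_def hadj_def hasse_def)
qed

lemma eq_reorient_orientation: "J = reorient J p xs (orientation J xs)"
proof (intro ext iffI)
  fix x y
  assume "J x y"
  then show "reorient J p xs (orientation J xs) x y"
    using path_pos_monotone collapse_monotone[OF poset] by (simp add: reorient_def)
next
  fix x y
  assume "reorient J p xs (orientation J xs) x y"
  then have "J (xs ! path_pos xs x) (xs ! path_pos xs y)" "J (collapse p xs x) (collapse p xs y)"
    using orientation_path_le_nth path_pos_less[OF nonempty distinct] by (auto simp: reorient_def)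
  then show "J x y"
    unfolding nth_path_pos_if collapse_if by (auto split: if_splits intro: J_trans)
qed

lemma hasse_reorient_nth:
  assumes "i < length xs" "l < length xs"
  shows "hasse (reorient J p xs e) (xs ! i) (xs ! l) \<longleftrightarrow> hasse (path_le e) i l"
proof -
  let ?R = "reorient J p xs e"
  have in_path: "z \<in> set xs" if "?R (xs ! i) z" "?R z (xs ! l)" for z
  proof (rule ccontr)
    assume "z \<notin> set xs"
    then have "J p z" "J z p" using that assms by (auto simp: reorient_def collapse_def)
    then show False using J_antisym p_in_set \<open>z \<notin> set xs\<close> by blast
  qed
  have "(\<exists>z. z \<noteq> xs ! i \<and> z \<noteq> xs ! l \<and> ?R (xs ! i) z \<and> ?R z (xs ! l))
      \<longleftrightarrow> (\<exists>m. m \<noteq> i \<and> m \<noteq> l \<and> path_le e i m \<and> path_le e m l)"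
  proof
    assume "\<exists>z. z \<noteq> xs ! i \<and> z \<noteq> xs ! l \<and> ?R (xs ! i) z \<and> ?R z (xs ! l)"
    then obtain z where z: "z \<noteq> xs ! i" "z \<noteq> xs ! l" "?R (xs ! i) z" "?R z (xs ! l)"
      by blast
    moreover obtain m where "m < length xs" "z = xs ! m"
      using in_path[OF z(3,4)] by (metis in_set_conv_nth)
    ultimately show "\<exists>m. m \<noteq> i \<and> m \<noteq> l \<and> path_le e i m \<and> path_le e m l"
      using assms by auto
  next
    assume "\<exists>m. m \<noteq> i \<and> m \<noteq> l \<and> path_le e i m \<and> path_le e m l"
    then obtain m where m: "m \<noteq> i" "m \<noteq> l" "path_le e i m" "path_le e m l" by blast
    then have "m < length xs" using path_le_between[of e i m l] assms by linarith
    then show "\<exists>z. z \<noteq> xs ! i \<and> z \<noteq> xs ! l \<and> ?R (xs ! i) z \<and> ?R z (xs ! l)"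
      using m assms distinct by (metis nth_eq_iff_index_eq reorient_nth)
  qed
  moreover have "xs ! i \<noteq> xs ! l \<longleftrightarrow> i \<noteq> l" using assms distinct nth_eq_iff_index_eq by blast
  ultimately show ?thesis using assms by (simp add: hasse_def)
qed

lemma hasse_reorient_off_path_not_tail:
  assumes "\<not> (u \<in> set xs \<and> v \<in> set xs)" "hasse (reorient J p xs e) u v"
  shows "\<not> in_tail u \<and> \<not> in_tail v"
proof (rule ccontr)
  have uv: "path_le e (path_pos xs u) (path_pos xs v)" "J (collapse p xs u) (collapse p xs v)"
    using assms(2) by (auto simp: hasse_def reorient_def)
  assume "\<not> (\<not> in_tail u \<and> \<not> in_tail v)"
  then consider "in_tail u" "v \<notin> set xs" | "in_tail v" "u \<notin> set xs" using assms(1) by blast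
  then have "u \<noteq> p \<and> v \<noteq> p \<and> reorient J p xs e u p \<and> reorient J p xs e p v"
  proof cases
    case 1
    then have "path_pos xs v = 0" using path_pos_eq_0_iff by blast
    then show ?thesis using 1 uv p_in_set J_refl by (auto simp: reorient_def collapse_def)
  next
    case 2
    then have "path_pos xs u = 0" using path_pos_eq_0_iff by blast
    then show ?thesis using 2 uv p_in_set J_refl by (auto simp: reorient_def collapse_def)
  qed
  then show False using assms(2) by (auto simp: hasse_def)
qed

lemma hasse_reorient_off_path:
  assumes "\<not> (u \<in> set xs \<and> v \<in> set xs)"
  shows "hasse (reorient J p xs e) u v \<longleftrightarrow>
    \<not> in_tail u \<and> \<not> in_tail v \<and> hasse (\<lambda>a b. \<not> in_tail a \<and> \<not> in_tail b \<and> J a b) u v"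
proof
  assume hasse_uv: "hasse (reorient J p xs e) u v"
  then have off: "\<not> in_tail u" "\<not> in_tail v"
    using hasse_reorient_off_path_not_tail[OF assms] by blast+
  moreover have "\<not> (J u z \<and> J z v)" if "\<not> in_tail z" "z \<noteq> u" "z \<noteq> v" for z
    using hasse_uv that off reorient_off_tail unfolding hasse_def by metis
  ultimately show "\<not> in_tail u \<and> \<not> in_tail v \<and> hasse (\<lambda>a b. \<not> in_tail a \<and> \<not> in_tail b \<and> J a b) u v"
    using hasse_uv reorient_off_tail unfolding hasse_def by blast
next
  assume off: "\<not> in_tail u \<and> \<not> in_tail v \<and> hasse (\<lambda>a b. \<not> in_tail a \<and> \<not> in_tail b \<and> J a b) u v"
  have "\<not> in_tail z" if "reorient J p xs e u z" "reorient J p xs e z v" for z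
  proof -
    have "path_pos xs u = 0" "path_pos xs v = 0" using off by (simp_all add: path_pos_eq_0_iff)
    then have "path_pos xs z = 0" using that path_le_antisym by (auto simp: reorient_def)
    then show ?thesis using path_pos_eq_0_iff by blast
  qed
  then show "hasse (reorient J p xs e) u v"
    using off reorient_off_tail unfolding hasse_def by metis
qed

lemma hasse_reorient_off_path_eq:
  "\<not> (u \<in> set xs \<and> v \<in> set xs) \<Longrightarrow> hasse (reorient J p xs e) u v = hasse J u v"
  using hasse_reorient_off_path[of u v e] hasse_reorient_off_path[of u v "orientation J xs"]
  by (simp add: eq_reorient_orientation[symmetric])

lemma hadj_reorient: "hadj (reorient J p xs e) = hadj J"
proof (intro ext)
  fix u v
  show "hadj (reorient J p xs e) u v = hadj J u v"
  proof (cases "u \<in> set xs \<and> v \<in> set xs")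
    case True
    then obtain i l where il: "i < length xs" "l < length xs" "u = xs ! i" "v = xs ! l"
      by (metis in_set_conv_nth)
    then have "hadj (reorient J p xs e) u v \<longleftrightarrow> l = Suc i \<or> i = Suc l"
      by (auto simp: hadj_def hasse_reorient_nth hasse_path_le)
    then show ?thesis using il hadj_nth by simp
  next
    case False
    then show ?thesis using hasse_reorient_off_path_eq by (auto simp: hadj_def)
  qed
qed

lemma reoriented_on_reorient: "reoriented_on J (set xs) (reorient J p xs e)"
  unfolding reoriented_on_def
  using is_poset_reorient hadj_reorient hasse_reorient_off_path_eq by simp

lemma anchored_path_list_transfer:
  "is_poset J' \<Longrightarrow> hadj J' = hadj J \<Longrightarrow> anchored_path_list J' p xs"
  by unfold_locales (use distinct nonempty first hadj_nth hadj_closed in auto)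

lemma reoriented_on_eq_reorient:
  assumes "reoriented_on J (set xs) J'"
  shows "J' = reorient J p xs (orientation J' xs)"
proof -
  have poset': "is_poset J'" using assms by (simp add: reoriented_on_def)
  interpret J': anchored_path_list J' p xs
    by (rule anchored_path_list_transfer[OF poset' reoriented_on_hadj[OF assms]])
  have hasse_eq: "\<not> (a \<in> set xs \<and> b \<in> set xs) \<Longrightarrow> hasse J' a b = hasse J a b" for a b
    using assms by (simp add: reoriented_on_def)
  have "J' (collapse p xs x) (collapse p xs y) \<longleftrightarrow> J (collapse p xs x) (collapse p xs y)" for x y
    using collapse_monotone[OF poset' hasse_eq] J'.collapse_monotone[OF poset hasse_eq[symmetric]]
    by (metis collapse_collapse)
  then have "reorient J' p xs e = reorient J p xs e" for e by (simp add: reorient_def fun_eq_iff)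
  then show ?thesis using J'.eq_reorient_orientation by metis
qed

lemma reorient_cong:
  assumes "\<And>m. 0 < m \<Longrightarrow> m < length xs \<Longrightarrow> e m = e' m"
  shows "reorient J p xs e = reorient J p xs e'"
proof -
  have "path_le e (path_pos xs x) (path_pos xs y) = path_le e' (path_pos xs x) (path_pos xs y)"
    for x y
    using path_pos_less[OF nonempty distinct, of x] path_pos_less[OF nonempty distinct, of y] assms
    by (intro path_le_cong) auto
  then show ?thesis by (simp add: reorient_def fun_eq_iff)
qed

lemma incmat_reorient:
  "incmat (reorient J p xs e) $ x $ y
     = of_bool (path_le e (path_pos xs x) (path_pos xs y))
       * of_bool (J (collapse p xs x) (collapse p xs y))"
  by (simp add: incmat_def reorient_def)

lemma incmat_reorient_right_nth:
  "l < length xs \<Longrightarrow> incmat (reorient J p xs e) $ x $ (xs ! l)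
     = of_bool (path_le e (path_pos xs x) l) * of_bool (J (collapse p xs x) p)"
  by (simp add: incmat_reorient distinct)

lemma incmat_reorient_left_nth:
  "l < length xs \<Longrightarrow> incmat (reorient J p xs e) $ (xs ! l) $ y
     = of_bool (path_le e l (path_pos xs y)) * of_bool (J p (collapse p xs y))"
  by (simp add: incmat_reorient distinct)

lemma minimal_reorient_True:
  "{x \<in> set xs. \<forall>y \<in> set xs. reorient J p xs (\<lambda>_. True) y x \<longrightarrow> y = x} = {p}"
proof -
  have "reorient J p xs (\<lambda>_. True) y x \<longleftrightarrow> path_pos xs y \<le> path_pos xs x"
    if "x \<in> set xs" "y \<in> set xs" for x y
    using that path_pos_less[OF nonempty distinct]
    by (metis distinct nth_path_pos reorient_nth path_le_True)
  then show ?thesis using p_in_set path_pos_eq_0_iff by fastforce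
qed

lemma maximal_reorient_False:
  "{x \<in> set xs. \<forall>y \<in> set xs. reorient J p xs (\<lambda>_. False) x y \<longrightarrow> y = x} = {p}"
proof -
  have "reorient J p xs (\<lambda>_. False) x y \<longleftrightarrow> path_pos xs y \<le> path_pos xs x"
    if "x \<in> set xs" "y \<in> set xs" for x y
    using that path_pos_less[OF nonempty distinct]
    by (metis distinct nth_path_pos reorient_nth path_le_False)
  then show ?thesis using p_in_set path_pos_eq_0_iff by fastforce
qed

end

locale anchored_path_source = anchored_path_list J p xs + path_source e j "length xs - 1"
  for J :: "'n::finite \<Rightarrow> 'n \<Rightarrow> bool" and p xs e j
begin

definition reflection_vector :: "'n \<Rightarrow> int" where
  "reflection_vector a = of_bool (a = xs ! (j - 1)) + of_bool (j < length xs - 1 \<and> a = xs ! Suc j)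
     - of_bool (a = xs ! j)"

lemma sum_reflection_vector:
  "(\<Sum>a\<in>UNIV. reflection_vector a * f a)
     = f (xs ! (j - 1)) + (if j < length xs - 1 then f (xs ! Suc j) else 0) - f (xs ! j)"
proof -
  have delta: "(\<Sum>a\<in>UNIV. of_bool (a = c) * f a) = f c" for c :: 'n
    by (simp add: of_bool_def mult_if_delta)
  show ?thesis
    by (cases "j < length xs - 1")
      (simp_all add: reflection_vector_def ring_distribs sum.distrib sum_subtractf delta)
qed

lemma j_less_length: "j < length xs"
  using le_k nonempty by (cases xs) auto

lemma path_pos_le: "path_pos xs x \<le> length xs - 1"
  using path_pos_less[OF nonempty distinct, of x] by linarith

lemma path_pos_eq_j: "path_pos xs x = j \<longleftrightarrow> x = xs ! j"
  using j_less_length distinct pos nth_path_pos_if path_pos_eq_0_iff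
  by (metis gr_implies_not0 path_pos_nth)

lemma reflection_vector_j: "reflection_vector (xs ! j) = -1"
  using j_less_length distinct pos
  by (auto simp: reflection_vector_def nth_eq_iff_index_eq)

lemma incmat_flipped_off:
  assumes "x \<noteq> xs ! j" "y \<noteq> xs ! j"
  shows "incmat (reorient J p xs flipped) $ x $ y = incmat (reorient J p xs e) $ x $ y"
proof -
  have "path_pos xs x \<noteq> j" "path_pos xs y \<noteq> j" using assms path_pos_eq_j by blast+
  then show ?thesis
    using flipped_path_le[OF path_pos_le path_pos_le] by (simp add: incmat_reorient)
qed

lemma incmat_flipped_column:
  assumes "x \<noteq> xs ! j"
  shows "(\<Sum>a\<in>UNIV. incmat (reorient J p xs e) $ x $ a * reflection_vector a)
    = incmat (reorient J p xs flipped) $ x $ (xs ! j)"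
proof -
  let ?i = "path_pos xs x"
  have "path_pos xs x \<noteq> j" using assms path_pos_eq_j by blast
  have "(\<Sum>a\<in>UNIV. incmat (reorient J p xs e) $ x $ a * reflection_vector a)
      = (\<Sum>a\<in>UNIV. reflection_vector a * incmat (reorient J p xs e) $ x $ a)"
    by (simp add: mult.commute)
  also have "\<dots> = (of_bool (path_le e ?i (j - 1))
      + (if j < length xs - 1 then of_bool (path_le e ?i (Suc j)) else 0)
      - of_bool (path_le e ?i j)) * of_bool (J (collapse p xs x) p)"
    using j_less_length
    by (cases "j < length xs - 1")
      (simp_all add: sum_reflection_vector incmat_reorient_right_nth algebra_simps)
  also have "\<dots> = incmat (reorient J p xs flipped) $ x $ (xs ! j)"
    using flipped_column[OF path_pos_le \<open>?i \<noteq> j\<close>] j_less_length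
    by (simp add: incmat_reorient_right_nth)
  finally show ?thesis .
qed

lemma incmat_flipped_row:
  assumes "y \<noteq> xs ! j"
  shows "(\<Sum>a\<in>UNIV. reflection_vector a * incmat (reorient J p xs e) $ a $ y)
    = incmat (reorient J p xs flipped) $ (xs ! j) $ y"
proof -
  let ?i = "path_pos xs y"
  have "path_pos xs y \<noteq> j" using assms path_pos_eq_j by blast
  have "(\<Sum>a\<in>UNIV. reflection_vector a * incmat (reorient J p xs e) $ a $ y)
      = (of_bool (path_le e (j - 1) ?i)
      + (if j < length xs - 1 then of_bool (path_le e (Suc j) ?i) else 0)
      - of_bool (path_le e j ?i)) * of_bool (J p (collapse p xs y))"
    using j_less_length
    by (cases "j < length xs - 1")
      (simp_all add: sum_reflection_vector incmat_reorient_left_nth algebra_simps)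
  also have "\<dots> = incmat (reorient J p xs flipped) $ (xs ! j) $ y"
    using flipped_row[OF path_pos_le \<open>?i \<noteq> j\<close>] j_less_length
    by (simp add: incmat_reorient_left_nth)
  finally show ?thesis .
qed

lemma incmat_flipped_diag:
  "(\<Sum>a\<in>UNIV.
      (\<Sum>b\<in>UNIV. reflection_vector b * incmat (reorient J p xs e) $ b $ a) * reflection_vector a)
    = incmat (reorient J p xs flipped) $ (xs ! j) $ (xs ! j)"
proof -
  obtain j0 where j: "j = Suc j0" using pos gr0_implies_Suc by blast
  have ne: "xs ! (j - 1) \<noteq> xs ! j" "j < length xs - 1 \<Longrightarrow> xs ! Suc j \<noteq> xs ! j"
    using j_less_length distinct by (auto simp: j nth_eq_iff_index_eq)
  have steps: "\<not> path_le flipped j (j - 1)" "\<not> path_le flipped j (Suc j)" "\<not> path_le e (j - 1) j"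
    "j < length xs - 1 \<Longrightarrow> \<not> path_le e (Suc j) j"
    using not_e e_Suc unfolding j by (simp_all add: path_le_Suc Suc_path_le)
  define R where "R a = (\<Sum>b\<in>UNIV. reflection_vector b * incmat (reorient J p xs e) $ b $ a)" for a
  have "R (xs ! (j - 1)) = 0" "j < length xs - 1 \<Longrightarrow> R (xs ! Suc j) = 0"
    using incmat_flipped_row[OF ne(1)] incmat_flipped_row[OF ne(2)] j_less_length steps(1,2)
    by (simp_all add: R_def incmat_reorient_left_nth distinct)
  moreover have "R (xs ! j) = -1"
    using j_less_length steps(3,4) J_refl
    by (cases "j < length xs - 1")
      (simp_all add: R_def sum_reflection_vector incmat_reorient_left_nth distinct)
  ultimately have "(\<Sum>a\<in>UNIV. reflection_vector a * R a) = 1"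
    by (simp add: sum_reflection_vector)
  then show ?thesis
    using j_less_length J_refl by (simp add: R_def mult.commute incmat_reorient_left_nth distinct)
qed

end

context anchored_path_list
begin

lemma matrix_congruent_flip:
  assumes "0 < j" "j < length xs" "\<not> e j" "Suc j < length xs \<Longrightarrow> e (Suc j)"
  shows "matrix_congruent (incmat (reorient J p xs e))
    (incmat (reorient J p xs (e(j := True, Suc j := False))))"
proof -
  interpret anchored_path_source J p xs e j by unfold_locales (use assms in auto)
  let ?B = "replace_column (xs ! j) reflection_vector"
  have "(transpose ?B ** incmat (reorient J p xs e) ** ?B) $ x $ y
      = incmat (reorient J p xs flipped) $ x $ y" for x y
    by (simp add: replace_column_mult_eq transpose_replace_column_mult_eq incmat_flipped_off
        incmat_flipped_column incmat_flipped_row incmat_flipped_diag)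
  then have "transpose ?B ** incmat (reorient J p xs e) ** ?B = incmat (reorient J p xs flipped)"
    by (simp add: vec_eq_iff)
  then show ?thesis
    unfolding matrix_congruent_def
    using replace_column_involution[where w = reflection_vector, OF reflection_vector_j] by metis
qed

(* The down edge at i is pushed to the end of the path by successive source flips and is reversed
   there as the edge of a leaf. *)
lemma matrix_congruent_push:
  assumes "0 < i" "i < length xs" "\<not> e i" "\<And>m. i < m \<Longrightarrow> m < length xs \<Longrightarrow> e m"
  shows "matrix_congruent (incmat (reorient J p xs e)) (incmat (reorient J p xs (e(i := True))))"
proof -
  have "i \<le> length xs - 1" using assms(2) by simp
  then show ?thesis using assms
  proof (induction i arbitrary: e rule: inc_induct)
    case base
    have "matrix_congruent (incmat (reorient J p xs e))
        (incmat (reorient J p xs (e(length xs - 1 := True, Suc (length xs - 1) := False))))"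
      by (rule matrix_congruent_flip) (use base in auto)
    moreover have "Suc (length xs - 1) = length xs" using nonempty by simp
    moreover have "reorient J p xs (e(length xs - 1 := True, length xs := False))
        = reorient J p xs (e(length xs - 1 := True))"
      by (rule reorient_cong) simp
    ultimately show ?case by metis
  next
    case (step n)
    define e' where "e' = e(n := True, Suc n := False)"
    have "matrix_congruent (incmat (reorient J p xs e)) (incmat (reorient J p xs e'))"
      unfolding e'_def using matrix_congruent_flip step.hyps step.prems by simp
    moreover have "matrix_congruent (incmat (reorient J p xs e'))
        (incmat (reorient J p xs (e'(Suc n := True))))"
      by (rule step.IH) (use step.hyps step.prems in \<open>auto simp: e'_def\<close>)
    moreover have "e'(Suc n := True) = e(n := True)"
      using step.hyps step.prems(4)[of "Suc n"] by (auto simp: e'_def fun_eq_iff)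
    ultimately show ?case by (metis matrix_congruent_trans)
  qed
qed

lemma matrix_congruent_reorient_True:
  "matrix_congruent (incmat (reorient J p xs e)) (incmat (reorient J p xs (\<lambda>_. True)))"
proof -
  have "matrix_congruent (incmat (reorient J p xs e)) (incmat (reorient J p xs (\<lambda>_. True)))"
    if "\<And>m. i < m \<Longrightarrow> m < length xs \<Longrightarrow> e m" for i e
    using that
  proof (induction i arbitrary: e)
    case 0
    then have "reorient J p xs e = reorient J p xs (\<lambda>_. True)" by (intro reorient_cong) simp
    then show ?case by (simp add: matrix_congruent_refl)
  next
    case (Suc i)
    show ?case
    proof (cases "Suc i < length xs \<and> \<not> e (Suc i)")
      case True
      then have "matrix_congruent (incmat (reorient J p xs e))
          (incmat (reorient J p xs (e(Suc i := True))))"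
        using matrix_congruent_push Suc.prems by simp
      moreover have "matrix_congruent (incmat (reorient J p xs (e(Suc i := True))))
          (incmat (reorient J p xs (\<lambda>_. True)))"
        using Suc.IH Suc.prems by simp
      ultimately show ?thesis by (rule matrix_congruent_trans)
    next
      case False
      then show ?thesis using Suc.IH Suc.prems by (metis Suc_lessI)
    qed
  qed
  then show ?thesis using less_trans by blast
qed

lemma reoriented_on_matrix_congruent:
  assumes "reoriented_on J (set xs) J'"
  shows "matrix_congruent (incmat J) (incmat J')"
proof -
  have "matrix_congruent (incmat J) (incmat (reorient J p xs (\<lambda>_. True)))"
    using matrix_congruent_reorient_True eq_reorient_orientation by metis
  moreover have "matrix_congruent (incmat J') (incmat (reorient J p xs (\<lambda>_. True)))"
    using matrix_congruent_reorient_True reoriented_on_eq_reorient[OF assms] by metis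
  ultimately show ?thesis by (metis matrix_congruent_sym matrix_congruent_trans)
qed

end

lemma anchored_path_hadj_cong: "hadj J' = hadj J \<Longrightarrow> anchored_path J' p S \<longleftrightarrow> anchored_path J p S"
  by (simp add: anchored_path_def disconnected_del_def is_component_del_def conn_del_def
      induced_is_path_def)

lemma component_del_closed:
  assumes "is_component_del J p C" "t \<in> C" "y \<noteq> p" "hadj J t y"
  shows "y \<in> C"
proof -
  have "t \<noteq> p" using assms(1,2) by (auto simp: is_component_del_def)
  then have "conn_del J p t y" using assms(3,4) by (simp add: conn_del_def r_into_rtranclp)
  then show ?thesis using assms(1-3) by (auto simp: is_component_del_def)
qed

lemma induced_path_hadj_nth:
  assumes "distinct ys"
    and "\<forall>u\<in>set ys. \<forall>v\<in>set ys. hadj J u v \<longleftrightarrow> (\<exists>i. Suc i < length ys \<and> {ys ! i, ys ! Suc i} = {u, v})"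
    and "i < length ys" "l < length ys"
  shows "hadj J (ys ! i) (ys ! l) \<longleftrightarrow> l = Suc i \<or> i = Suc l"
proof -
  have "{ys ! m, ys ! Suc m} = {ys ! i, ys ! l} \<longleftrightarrow> (m = i \<and> Suc m = l) \<or> (m = l \<and> Suc m = i)"
    if "Suc m < length ys" for m
    using that assms(1,3,4) by (auto simp: doubleton_eq_iff nth_eq_iff_index_eq)
  then show ?thesis using assms(2-4) by (auto simp: Suc_lessD)
qed

lemma hadj_nth_rev:
  assumes "\<And>i l. i < length ys \<Longrightarrow> l < length ys \<Longrightarrow> hadj J (ys ! i) (ys ! l) \<longleftrightarrow> l = Suc i \<or> i = Suc l"
    and "i < length ys" "l < length ys"
  shows "hadj J (rev ys ! i) (rev ys ! l) \<longleftrightarrow> l = Suc i \<or> i = Suc l"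
  using assms(1)[of "length ys - Suc i" "length ys - Suc l"] assms(2,3) by (auto simp: rev_nth)

lemma degree_one_path_end:
  assumes "distinct ys" "q < length ys"
    and ys_nth: "\<And>i l. i < length ys \<Longrightarrow> l < length ys \<Longrightarrow>
        hadj J (ys ! i) (ys ! l) \<longleftrightarrow> l = Suc i \<or> i = Suc l"
    and deg: "card {v \<in> set ys. hadj J (ys ! q) v} = 1"
  shows "q = 0 \<or> q = length ys - 1"
proof (rule ccontr)
  assume "\<not> (q = 0 \<or> q = length ys - 1)"
  then have bounds: "q - 1 < length ys" "Suc q < length ys" "q = Suc (q - 1)" using assms(2) by auto
  then have "hadj J (ys ! q) (ys ! (q - 1))" "hadj J (ys ! q) (ys ! Suc q)"
    using ys_nth[of q "q - 1"] ys_nth[of q "Suc q"] by simp_all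
  then have "{ys ! (q - 1), ys ! Suc q} \<subseteq> {v \<in> set ys. hadj J (ys ! q) v}"
    using bounds(1,2) nth_mem by blast
  then have "card {ys ! (q - 1), ys ! Suc q} \<le> 1"
    using deg card_mono[of "{v \<in> set ys. hadj J (ys ! q) v}"] by simp
  moreover have "ys ! (q - 1) \<noteq> ys ! Suc q"
    using assms(1) bounds by (simp add: nth_eq_iff_index_eq)
  ultimately show False by simp
qed

lemma anchored_path_list_exists:
  assumes "is_poset J" "anchored_path J p S"
  shows "\<exists>xs. set xs = S \<and> anchored_path_list J p xs"
proof -
  have pS: "p \<in> S" and comp: "is_component_del J p (S - {p})" and path: "induced_is_path J S"
    and deg: "card {v \<in> S. hadj J p v} = 1"
    using assms(2) by (simp_all add: anchored_path_def)
  obtain ys where ys: "distinct ys" "set ys = S"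
    and adj: "\<forall>u\<in>set ys. \<forall>v\<in>set ys.
      hadj J u v \<longleftrightarrow> (\<exists>i. Suc i < length ys \<and> {ys ! i, ys ! Suc i} = {u, v})"
    using path unfolding induced_is_path_def by metis
  note ys_nth = induced_path_hadj_nth[OF ys(1) adj]
  obtain q where q: "q < length ys" "ys ! q = p" using pS ys(2) by (metis in_set_conv_nth)
  have q_end: "q = 0 \<or> q = length ys - 1"
    using degree_one_path_end[OF ys(1) q(1) ys_nth] deg ys(2) q(2) by simp
  obtain xs where xs: "distinct xs" "set xs = S" "xs ! 0 = p"
    and xs_nth: "\<And>i l. i < length xs \<Longrightarrow> l < length xs \<Longrightarrow>
        hadj J (xs ! i) (xs ! l) \<longleftrightarrow> l = Suc i \<or> i = Suc l"
  proof (cases "q = 0")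
    case True
    show ?thesis by (rule that[of ys]) (use ys ys_nth q True in simp_all)
  next
    case False
    then have "q = length ys - 1" using q_end by blast
    moreover have "ys \<noteq> []" using q(1) by auto
    ultimately have "rev ys ! 0 = p" using q(2) rev_nth[of 0 ys] by simp
    show ?thesis
      by (rule that[of "rev ys"])
        (use ys hadj_nth_rev[of ys, OF ys_nth] \<open>rev ys ! 0 = p\<close> in simp_all)
  qed
  have "anchored_path_list J p xs"
  proof
    show "xs \<noteq> []" using xs(2) pS by auto
    fix t y assume "t \<in> set xs" "t \<noteq> p" "hadj J t y"
    then show "y \<in> set xs"
      using component_del_closed[OF comp, of t y] xs(2) pS by (cases "y = p") auto
  qed (use assms(1) xs xs_nth in simp_all)
  then show ?thesis using xs(2) by blast
qed

theorem corollary3p4: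
  fixes J :: "'n::finite \<Rightarrow> 'n \<Rightarrow> bool" and p :: 'n and Jp :: "'n set"
  assumes "is_poset J"
    and "anchored_path J p Jp"
  shows "((\<exists>J'. reoriented_on J Jp J' \<and> outward_anchored_path J' p Jp) \<and>
         (\<forall>J'. reoriented_on J Jp J' \<and> outward_anchored_path J' p Jp \<longrightarrow> strong_gram_congr J J')) \<and>
         ((\<exists>J'. reoriented_on J Jp J' \<and> inward_anchored_path J' p Jp) \<and>
         (\<forall>J'. reoriented_on J Jp J' \<and> inward_anchored_path J' p Jp \<longrightarrow> strong_gram_congr J J')) \<and>
         (\<forall>J' r. reoriented_on J Jp J' \<longrightarrow> (nonneg_corank J' r \<longleftrightarrow> nonneg_corank J r))"
proof -
  obtain xs where xs: "set xs = Jp" "anchored_path_list J p xs"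
    using anchored_path_list_exists[OF assms] by blast
  interpret anchored_path_list J p xs by (rule xs(2))
  have anchored: "anchored_path (reorient J p xs e) p Jp" for e
    using assms(2) anchored_path_hadj_cong[OF hadj_reorient] by simp
  have congruent: "matrix_congruent (incmat J) (incmat J')" if "reoriented_on J Jp J'" for J'
    using reoriented_on_matrix_congruent that xs(1) by simp
  have "reoriented_on J Jp (reorient J p xs (\<lambda>_. True))"
    "outward_anchored_path (reorient J p xs (\<lambda>_. True)) p Jp"
    using reoriented_on_reorient anchored minimal_reorient_True xs(1)
    by (simp_all add: outward_anchored_path_def)
  moreover have "reoriented_on J Jp (reorient J p xs (\<lambda>_. False))"
    "inward_anchored_path (reorient J p xs (\<lambda>_. False)) p Jp"
    using reoriented_on_reorient anchored maximal_reorient_False xs(1)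
    by (simp_all add: inward_anchored_path_def)
  moreover have "strong_gram_congr J J'" if "reoriented_on J Jp J'" for J'
    using strong_gram_congr_if_matrix_congruent matrix_congruent_sym congruent that by blast
  moreover have "nonneg_corank J' r \<longleftrightarrow> nonneg_corank J r" if "reoriented_on J Jp J'" for J' r
    using nonneg_corank_matrix_congruent congruent that by blast
  ultimately show ?thesis by blast
qed

end
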